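(* Let $A$ and $B$ be disjoint cubic graphs with $v(A)\equiv 0\pmod 6$ and $v(B)\equiv 0\pmod 6$, let $a\in V(A)$ with $N(a,A)=\{a_1,a_2,a_3\}$ and $b\in V(B)$ with $N(b,B)=\{b_1,b_2,b_3\}$, and let $H=Aa\sigma bB$ where $\sigma(a_i)=b_i$ for $i\in\{1,2,3\}$. Suppose $A$ has no $\Lambda$-factor containing the edge $aa_1$. Then $v(H)\equiv 4\pmod 6$ and $H-b_2$ has no $\Lambda$-factor avoiding the edge $h=a_3b_3$ (i.e. every $\Lambda$-factor of $H-b_2$ contains $h$).
   Context: Graphs are finite, undirected, without loops or multiple edges; $v(G)=|V(G)|$; $N(x,G)$ is the set of neighbours of $x$. For disjoint graphs $A,B$, vertices $a,b$ and a bijection $\sigma:N(a,A)\to N(b,B)$, $Aa\sigma bB$ is $(A-a)\cup(B-b)$ together with the new edges $\{x\sigma(x): x\in N(a,A)\}$. $H-b_2$ denotes deletion of the vertex $b_2$. A $\Lambda$-factor of a graph is a spanning subgraph each of whose components is a path on 3 vertices. *)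

theory Defs
  imports Main
begin

type_synonym 'a graph = "'a set \<times> 'a set set"

definition verts :: "'a graph \<Rightarrow> 'a set" where "verts G = fst G"
definition edges :: "'a graph \<Rightarrow> 'a set set" where "edges G = snd G"

definition graph :: "'a graph \<Rightarrow> bool" where
  "graph G \<longleftrightarrow> finite (verts G) \<and>
     (\<forall>e\<in>edges G. \<exists>x y. x \<noteq> y \<and> e = {x, y} \<and> x \<in> verts G \<and> y \<in> verts G)"

definition nbrs :: "'a graph \<Rightarrow> 'a \<Rightarrow> 'a set" where
  "nbrs G x = {y. {x, y} \<in> edges G}"

definition cubic :: "'a graph \<Rightarrow> bool" where
  "cubic G \<longleftrightarrow> graph G \<and> (\<forall>x\<in>verts G. card (nbrs G x) = 3)"

definition del_vertex :: "'a graph \<Rightarrow> 'a \<Rightarrow> 'a graph" where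
  "del_vertex G v = (verts G - {v}, {e \<in> edges G. v \<notin> e})"

definition glue :: "'a graph \<Rightarrow> 'a \<Rightarrow> ('a \<Rightarrow> 'a) \<Rightarrow> 'a \<Rightarrow> 'a graph \<Rightarrow> 'a graph" where
  "glue A a \<sigma> b B =
     ((verts A - {a}) \<union> (verts B - {b}),
      {e \<in> edges A. a \<notin> e} \<union> {e \<in> edges B. b \<notin> e} \<union> {{x, \<sigma> x} | x. x \<in> nbrs A a})"

definition component :: "'a set \<Rightarrow> 'a set set \<Rightarrow> 'a \<Rightarrow> 'a set" where
  "component V F v = {u. (\<lambda>x y. {x, y} \<in> F)\<^sup>*\<^sup>* v u}"

text \<open>A Lambda-factor: a spanning subgraph (V, F) of G each of whose components is a
  path on 3 vertices.\<close>
definition lambda_factor :: "'a graph \<Rightarrow> 'a set set \<Rightarrow> bool" where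
  "lambda_factor G F \<longleftrightarrow> F \<subseteq> edges G \<and>
     (\<forall>v\<in>verts G. \<exists>x y z. x \<noteq> y \<and> y \<noteq> z \<and> x \<noteq> z \<and>
        component (verts G) F v = {x, y, z} \<and>
        {e \<in> F. e \<subseteq> {x, y, z}} = {{x, y}, {y, z}})"

end

theory Submission
  imports Defs
begin

text \<open>In H - b2 the vertex set S = V(A) - a is joined to the rest only by the edges a1b1
  and a3b3. If a \<Lambda>-factor F of H - b2 avoids a3b3, every path of F meeting S lies inside S,
  except the path C through a1b1. Since |S| \<equiv> 2 (mod 3), counting modulo 3 forces C to meet S
  in exactly two vertices, so C is the path x a1 b1 with x in S. Replacing b1 by a turns C into
  the path x a1 a, and together with the other paths inside S this is a \<Lambda>-factor of A
  containing aa1.\<close>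

lemma component_refl: "v \<in> component V F v"
  by (simp add: component_def)

lemma component_edge: "u \<in> component V F v \<Longrightarrow> {u, w} \<in> F \<Longrightarrow> w \<in> component V F v"
  unfolding component_def by (auto intro: rtranclp.rtrancl_into_rtrancl)

lemma component_vertex_set: "component V F v = component W F v"
  by (simp add: component_def)

lemma component_sym: "u \<in> component V F v \<Longrightarrow> v \<in> component V F u"
  unfolding component_def
proof (simp, induction rule: rtranclp_induct)
  case (step y z)
  have "{z, y} \<in> F" using step(2) by (simp add: insert_commute)
  then show ?case using step(3) by (rule converse_rtranclp_into_rtranclp)
qed simp

lemma component_eq: "u \<in> component V F v \<Longrightarrow> component V F u = component V F v"
proof -
  have "w \<in> component V F v" if "w \<in> component V F u" "u \<in> component V F v" for u v w
    using that unfolding component_def by (auto intro: rtranclp_trans)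
  then show "u \<in> component V F v \<Longrightarrow> component V F u = component V F v"
    by (meson component_sym subsetI subset_antisym)
qed

lemma component_subset_closed:
  assumes "\<And>u w. u \<in> S \<Longrightarrow> {u, w} \<in> F \<Longrightarrow> w \<in> S" and "v \<in> S"
  shows "component V F v \<subseteq> S"
proof
  fix u assume "u \<in> component V F v"
  then have "(\<lambda>x y. {x, y} \<in> F)\<^sup>*\<^sup>* v u" by (simp add: component_def)
  then show "u \<in> S"
    by (induction rule: rtranclp_induct) (use assms in auto)
qed

lemma component_cong:
  assumes agree: "\<And>e. e \<inter> component V F v \<noteq> {} \<Longrightarrow> e \<in> F' \<longleftrightarrow> e \<in> F"
  shows "component V F' v = component V F v"
proof
  let ?K = "component V F v" and ?K' = "component V F' v"
  have "w \<in> ?K" if "u \<in> ?K" "{u, w} \<in> F'" for u w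
  proof -
    have "{u, w} \<in> F" using that agree[of "{u, w}"] by auto
    with that(1) show ?thesis by (rule component_edge)
  qed
  then show "?K' \<subseteq> ?K"
    using component_refl by (rule component_subset_closed)
  have closed: "w \<in> ?K \<inter> ?K'" if "u \<in> ?K \<inter> ?K'" "{u, w} \<in> F" for u w
  proof -
    have "{u, w} \<in> F'" using that agree[of "{u, w}"] by auto
    then show ?thesis using that component_edge[of u V F v w] component_edge[of u V F' v w] by simp
  qed
  have "v \<in> ?K \<inter> ?K'" using component_refl[of v V] by simp
  with closed have "?K \<subseteq> ?K \<inter> ?K'"
    by (rule component_subset_closed)
  then show "?K \<subseteq> ?K'" by blast
qed

definition path3_component :: "'a set set \<Rightarrow> 'a \<Rightarrow> bool" where
  "path3_component F v \<longleftrightarrow> (\<exists>x y z. x \<noteq> y \<and> y \<noteq> z \<and> x \<noteq> z \<and>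
     component UNIV F v = {x, y, z} \<and> {e \<in> F. e \<subseteq> {x, y, z}} = {{x, y}, {y, z}})"

lemma lambda_factor_iff:
  "lambda_factor G F \<longleftrightarrow> F \<subseteq> edges G \<and> (\<forall>v\<in>verts G. path3_component F v)"
  unfolding lambda_factor_def path3_component_def by (simp add: component_def)

lemma path3_component_card:
  assumes "path3_component F v"
  shows "card (component V F v) = 3"
proof -
  obtain x y z where "x \<noteq> y" "y \<noteq> z" "x \<noteq> z" "component UNIV F v = {x, y, z}"
    using assms unfolding path3_component_def by blast
  then show ?thesis by (simp add: component_vertex_set[of V _ _ UNIV])
qed

lemma path3_component_cong:
  assumes "path3_component F v" and "{} \<notin> F'"
    and "\<And>e. e \<inter> component UNIV F v \<noteq> {} \<Longrightarrow> e \<in> F' \<longleftrightarrow> e \<in> F"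
  shows "path3_component F' v"
proof -
  have K: "component UNIV F' v = component UNIV F v"
    using assms(3) by (rule component_cong)
  obtain x y z where xyz: "x \<noteq> y" "y \<noteq> z" "x \<noteq> z" "component UNIV F v = {x, y, z}"
    and E: "{e \<in> F. e \<subseteq> {x, y, z}} = {{x, y}, {y, z}}"
    using assms(1) unfolding path3_component_def by blast
  have "e \<in> F' \<longleftrightarrow> e \<in> F" if "e \<subseteq> {x, y, z}" "e \<noteq> {}" for e
    using assms(3) that xyz(4) by blast
  moreover have "{} \<notin> F" using E by blast
  ultimately have "{e \<in> F'. e \<subseteq> {x, y, z}} = {e \<in> F. e \<subseteq> {x, y, z}}"
    using assms(2) by blast
  then show ?thesis
    unfolding path3_component_def using xyz K E by metis
qed

lemma path3_component_empty_not_edge: "path3_component F v \<Longrightarrow> {} \<notin> F"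
  unfolding path3_component_def by blast

lemma path3_componentI:
  assumes "x \<noteq> y" "y \<noteq> z" "x \<noteq> z" "{x, y} \<in> F" "{y, z} \<in> F" "{} \<notin> F"
    and only: "\<And>e. e \<in> F \<Longrightarrow> e \<inter> {x, y, z} \<noteq> {} \<Longrightarrow> e = {x, y} \<or> e = {y, z}"
    and "v \<in> {x, y, z}"
  shows "path3_component F v"
proof -
  have closed: "w \<in> {x, y, z}" if "u \<in> {x, y, z}" "{u, w} \<in> F" for u w
    using only[OF that(2)] that(1) by (auto simp: doubleton_eq_iff)
  have "component UNIV F v \<subseteq> {x, y, z}"
    using closed assms(8) by (rule component_subset_closed)
  moreover have "{x, y, z} \<subseteq> component UNIV F y"
    using component_refl component_edge assms(4,5) by (metis empty_subsetI insert_commute insert_subset)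
  moreover have "component UNIV F v = component UNIV F y"
    using calculation assms(8) by (metis component_eq subsetD)
  ultimately have "component UNIV F v = {x, y, z}" by blast
  moreover have "{e \<in> F. e \<subseteq> {x, y, z}} = {{x, y}, {y, z}}"
  proof (intro equalityI subsetI)
    fix e assume "e \<in> {e \<in> F. e \<subseteq> {x, y, z}}"
    moreover then have "e \<noteq> {}" using assms(6) by auto
    ultimately show "e \<in> {{x, y}, {y, z}}" using only by auto
  qed (use assms(4,5) in auto)
  ultimately show ?thesis
    unfolding path3_component_def using assms(1-3) by blast
qed

lemma path3_component_missing_pair:
  assumes "path3_component F v" "component V F v = {p, q, r}"
    and "p \<noteq> q" "p \<noteq> r" "q \<noteq> r" "{q, r} \<notin> F"
  shows "{p, q} \<in> F"
proof -
  obtain x y z where xyz: "x \<noteq> y" "y \<noteq> z" "x \<noteq> z" "component UNIV F v = {x, y, z}"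
    and E: "{e \<in> F. e \<subseteq> {x, y, z}} = {{x, y}, {y, z}}"
    using assms(1) unfolding path3_component_def by blast
  have same: "{p, q, r} = {x, y, z}"
    using xyz(4) assms(2) component_vertex_set by metis
  have "{x, y} \<in> {e \<in> F. e \<subseteq> {x, y, z}}" "{y, z} \<in> {e \<in> F. e \<subseteq> {x, y, z}}"
    unfolding E by simp_all
  then have xy: "{x, y} \<in> F" and yz: "{y, z} \<in> F" by simp_all
  have pqr: "p \<in> {x, y, z}" "q \<in> {x, y, z}" "r \<in> {x, y, z}"
    unfolding same[symmetric] by simp_all
  consider "p = x" | "p = y" | "p = z" using pqr(1) by blast
  then show ?thesis
  proof cases
    case 1
    then have "{q, r} = {y, z}" using pqr(2,3) assms(3-5) by auto
    then show ?thesis using yz assms(6) by simp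
  next
    case 2
    then have "{p, q} = {x, y} \<or> {p, q} = {y, z}" using pqr(2) assms(3) by auto
    then show ?thesis using xy yz by auto
  next
    case 3
    then have "{q, r} = {x, y}" using pqr(2,3) assms(3-5) by auto
    then show ?thesis using xy assms(6) by simp
  qed
qed

lemma lambda_factor_closed_card_dvd:
  assumes lf: "lambda_factor G F" and "finite S" "S \<subseteq> verts G"
    and closed: "\<And>u w. u \<in> S \<Longrightarrow> {u, w} \<in> F \<Longrightarrow> w \<in> S"
  shows "3 dvd card S"
proof -
  let ?C = "(\<lambda>v. component UNIV F v) ` S"
  have "component UNIV F v \<subseteq> S" if "v \<in> S" for v
    using closed that by (rule component_subset_closed)
  then have "\<Union>?C \<subseteq> S" by (rule UN_least)
  moreover have "S \<subseteq> \<Union>?C" by (meson UN_I component_refl subsetI)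
  ultimately have S: "\<Union>?C = S" by (rule subset_antisym)
  have "3 dvd card (\<Union>?C)"
  proof (rule dvd_partition)
    show "finite (\<Union>?C)" using S assms(2) by simp
    show "\<forall>c\<in>?C. 3 dvd card c"
    proof
      fix c assume "c \<in> ?C"
      then obtain v where "v \<in> S" "c = component UNIV F v" by blast
      moreover have "path3_component F v"
        using lf \<open>v \<in> S\<close> assms(3) unfolding lambda_factor_iff by blast
      ultimately show "3 dvd card c" using path3_component_card[of F v UNIV] by simp
    qed
    show "\<forall>c1\<in>?C. \<forall>c2\<in>?C. c1 \<noteq> c2 \<longrightarrow> c1 \<inter> c2 = {}"
    proof (intro ballI impI)
      fix c1 c2 assume "c1 \<in> ?C" "c2 \<in> ?C" "c1 \<noteq> c2"
      then obtain v1 v2 where v: "c1 = component UNIV F v1" "c2 = component UNIV F v2" by blast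
      have "c1 = c2" if "u \<in> c1" "u \<in> c2" for u
        using that v component_eq by metis
      then show "c1 \<inter> c2 = {}" using \<open>c1 \<noteq> c2\<close> by blast
    qed
  qed
  then show ?thesis using S by simp
qed

lemma graph_edge_endpoints:
  "graph G \<Longrightarrow> {u, w} \<in> edges G \<Longrightarrow> u \<noteq> w \<and> u \<in> verts G \<and> w \<in> verts G"
  unfolding graph_def by (metis doubleton_eq_iff)

lemma graph_edge_subset: "graph G \<Longrightarrow> e \<in> edges G \<Longrightarrow> e \<subseteq> verts G"
  unfolding graph_def by force

lemma graph_edgeE:
  assumes "graph G" "e \<in> edges G"
  obtains x y where "x \<noteq> y" "e = {x, y}"
  using assms unfolding graph_def by blast

lemma graph_empty_not_edge: "graph G \<Longrightarrow> {} \<notin> edges G"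
  unfolding graph_def by blast

lemma lambda_factor_insert_pendant_edge:
  assumes A: "graph A" and F: "F \<subseteq> edges A" and "{a, a1} \<in> edges A" "{a1, x} \<in> F" "a \<noteq> x"
    and isolated: "\<And>e. e \<in> F \<Longrightarrow> e \<inter> {a, a1, x} \<noteq> {} \<Longrightarrow> e = {a1, x}"
    and rest: "\<And>v. v \<in> verts A - {a, a1, x} \<Longrightarrow> path3_component F v"
  shows "lambda_factor A (insert {a, a1} F)"
  unfolding lambda_factor_iff
proof (intro conjI ballI)
  let ?F = "insert {a, a1} F"
  show F': "?F \<subseteq> edges A" using F assms(3) by simp
  then have no_empty: "{} \<notin> ?F" using graph_empty_not_edge[OF A] by auto
  have "a \<noteq> a1" using graph_edge_endpoints[OF A assms(3)] by simp
  have "a1 \<noteq> x" using graph_edge_endpoints[OF A, of a1 x] assms(4) F by auto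
  fix v assume v: "v \<in> verts A"
  show "path3_component ?F v"
  proof (cases "v \<in> {a, a1, x}")
    case True
    have "e = {a, a1} \<or> e = {a1, x}" if "e \<in> ?F" "e \<inter> {a, a1, x} \<noteq> {}" for e
      using that isolated by auto
    then show ?thesis
      using \<open>a \<noteq> a1\<close> \<open>a1 \<noteq> x\<close> \<open>a \<noteq> x\<close> assms(4) no_empty True
      by (intro path3_componentI) auto
  next
    case False
    have closed: "w \<in> {a, a1, x}" if "u \<in> {a, a1, x}" "{u, w} \<in> F" for u w
      using isolated[OF that(2)] that(1) by (auto simp: doubleton_eq_iff)
    have outside: "u \<notin> component UNIV F v" if "u \<in> {a, a1, x}" for u
    proof
      assume "u \<in> component UNIV F v"
      then have "v \<in> component UNIV F u" by (rule component_sym)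
      moreover have "component UNIV F u \<subseteq> {a, a1, x}"
        using closed that by (rule component_subset_closed)
      ultimately show False using False by auto
    qed
    have agree: "e \<in> ?F \<longleftrightarrow> e \<in> F" if "e \<inter> component UNIV F v \<noteq> {}" for e
      using that outside[of a] outside[of a1] by auto
    have "path3_component F v" using rest v False by simp
    then show ?thesis using no_empty agree by (rule path3_component_cong)
  qed
qed

lemma three_dvd_pred_diff_eq_2:
  fixes n m :: nat
  assumes "3 dvd n - 1 - m" "m \<le> 2" "1 \<le> m" "3 dvd n" "1 \<le> n"
  shows "m = 2"
  using assms by presburger

locale single_exit_factor =
  fixes A G :: "'a graph" and F :: "'a set set" and a a1 c :: 'a
  assumes graph_A: "graph A" and card_A: "3 dvd card (verts A)"
    and a_in_A: "a \<in> verts A" and pendant: "{a, a1} \<in> edges A" and c_notin_A: "c \<notin> verts A"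
    and factor: "lambda_factor G F" and subset_G: "verts A - {a} \<subseteq> verts G"
    and exits: "\<And>e. e \<in> F \<Longrightarrow> e \<inter> (verts A - {a}) \<noteq> {} \<Longrightarrow> (e \<in> edges A \<and> a \<notin> e) \<or> e = {a1, c}"
begin

abbreviation S :: "'a set" where "S \<equiv> verts A - {a}"

abbreviation C :: "'a set" where "C \<equiv> component UNIV F a1"

lemma finite_A: "finite (verts A)"
  using graph_A by (simp add: graph_def)

lemma a1_in_S: "a1 \<in> S"
  using graph_edge_endpoints[OF graph_A pendant] by auto

lemma edge_from_S:
  assumes "u \<in> S" "{u, w} \<in> F"
  shows "(w \<in> S \<and> {u, w} \<in> edges A) \<or> (u = a1 \<and> w = c)"
  using exits[OF assms(2)] assms(1) graph_edge_endpoints[OF graph_A, of u w] c_notin_A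
  by (auto simp: doubleton_eq_iff)

lemma card_S: "card S = card (verts A) - 1" and card_A_pos: "card (verts A) \<ge> 1"
  using a_in_A finite_A card_gt_0_iff[of "verts A"] by auto

lemma exit_edge: "{a1, c} \<in> F"
proof (rule ccontr)
  assume "{a1, c} \<notin> F"
  then have closed: "w \<in> S" if "u \<in> S" "{u, w} \<in> F" for u w
    using edge_from_S[OF that] that(2) by auto
  have "3 dvd card S"
    using finite_A by (intro lambda_factor_closed_card_dvd[OF factor _ subset_G closed]) simp
  then show False using card_S card_A_pos card_A by presburger
qed

lemma S_minus_C_closed:
  assumes "u \<in> S - C" "{u, w} \<in> F"
  shows "w \<in> S - C"
proof -
  have "u \<noteq> a1" using assms(1) component_refl[of a1 UNIV F] by blast
  then have "w \<in> S" using edge_from_S[of u w] assms by auto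
  moreover have "w \<notin> C"
  proof
    assume "w \<in> C"
    moreover have "{w, u} \<in> F" using assms(2) by (simp add: insert_commute)
    ultimately have "u \<in> C" by (rule component_edge)
    then show False using assms(1) by blast
  qed
  ultimately show ?thesis by blast
qed

lemma exit_component:
  obtains x where "x \<in> S" "x \<noteq> a1" "C = {a1, c, x}"
proof -
  have a1_C: "a1 \<in> C" by (rule component_refl)
  have c_C: "c \<in> C" using a1_C exit_edge by (rule component_edge)
  have "path3_component F a1"
    using factor a1_in_S subset_G unfolding lambda_factor_iff by blast
  then have card_C: "card C = 3" by (rule path3_component_card)
  then have finite_C: "finite C" by (simp add: card_ge_0_finite)
  have "3 dvd card (S - C)"
    using finite_A subset_G by (intro lambda_factor_closed_card_dvd[OF factor _ _ S_minus_C_closed]) auto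
  moreover have "card (S - C) = card S - card (S \<inter> C)"
    using finite_C by (simp add: card_Diff_subset_Int)
  ultimately have "3 dvd card (verts A) - 1 - card (S \<inter> C)"
    using card_S by simp
  moreover have "card (S \<inter> C) \<le> 2"
  proof -
    have "S \<inter> C \<subseteq> C - {c}" using c_notin_A by blast
    then have "card (S \<inter> C) \<le> card (C - {c})" using finite_C by (intro card_mono) auto
    then show ?thesis using card_C c_C by simp
  qed
  moreover have "card (S \<inter> C) \<ge> 1"
    using a1_in_S a1_C finite_C card_gt_0_iff[of "S \<inter> C"] by auto
  ultimately have "card (S \<inter> C) = 2"
    using card_A card_A_pos by (rule three_dvd_pred_diff_eq_2)
  then have "card (S \<inter> C - {a1}) = 1"
    using a1_in_S a1_C card_Diff_singleton[of a1 "S \<inter> C"] by simp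
  then obtain x where "S \<inter> C - {a1} = {x}" by (rule card_1_singletonE)
  then have "x \<in> S \<inter> C - {a1}" by simp
  then have "x \<in> S" "x \<noteq> a1" "x \<in> C" by simp_all
  moreover have "C = {a1, c, x}"
  proof -
    have "{a1, c, x} \<subseteq> C" using a1_C c_C \<open>x \<in> C\<close> by simp
    moreover have "c \<noteq> a1" "c \<noteq> x"
      using \<open>x \<in> S\<close> a1_in_S c_notin_A by auto
    then have "card {a1, c, x} = 3" using \<open>x \<noteq> a1\<close> by simp
    ultimately show ?thesis using finite_C card_C card_subset_eq by metis
  qed
  ultimately show ?thesis by (meson that)
qed

lemma no_empty_edge: "{} \<notin> F"
proof -
  have "path3_component F a1"
    using factor a1_in_S subset_G unfolding lambda_factor_iff by blast
  then show ?thesis by (rule path3_component_empty_not_edge)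
qed

lemma edge_inside_S:
  assumes "e \<in> F" "e \<inter> S \<noteq> {}" "e \<noteq> {a1, c}"
  shows "e \<in> edges A \<and> e \<subseteq> S"
proof -
  have "e \<in> edges A" "a \<notin> e" using exits[OF assms(1,2)] assms(3) by auto
  then show ?thesis using graph_edge_subset[OF graph_A] by blast
qed

lemma lambda_factor_restrict_insert_pendant: "lambda_factor A (insert {a, a1} {e \<in> F. e \<subseteq> S})"
proof -
  obtain x where x: "x \<in> S" "x \<noteq> a1" and C: "C = {a1, c, x}" by (rule exit_component)
  let ?F = "{e \<in> F. e \<subseteq> S}"
  have S_C: "S \<inter> C = {a1, x}" using x C a1_in_S c_notin_A by auto
  have "{x, c} \<notin> F" using edge_from_S[OF x(1)] x(2) c_notin_A by blast
  moreover have "path3_component F a1"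
    using factor a1_in_S subset_G unfolding lambda_factor_iff by blast
  moreover have "C = {a1, x, c}" using C by (simp add: insert_commute)
  ultimately have "{a1, x} \<in> F"
    using x a1_in_S c_notin_A by (intro path3_component_missing_pair) auto
  then have a1x: "{a1, x} \<in> ?F" using x(1) a1_in_S by simp
  have inside: "?F \<subseteq> edges A"
  proof
    fix e assume e: "e \<in> ?F"
    then have "e \<noteq> {}" "e \<noteq> {a1, c}" using no_empty_edge c_notin_A by auto
    with e show "e \<in> edges A" using edge_inside_S by blast
  qed
  have isolated: "e = {a1, x}" if e: "e \<in> ?F" "e \<inter> {a, a1, x} \<noteq> {}" for e
  proof -
    obtain p q where pq: "e = {p, q}" "p \<noteq> q"
      using graph_edgeE[OF graph_A] inside e(1) by blast
    have "e \<inter> C \<noteq> {}" using e S_C by auto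
    moreover have "{p, q} \<in> F" "{q, p} \<in> F" using e(1) pq(1) by (auto simp: insert_commute)
    ultimately have "p \<in> C" "q \<in> C" using pq(1) component_edge by fastforce+
    then have "e \<subseteq> {a1, x}" using e(1) pq(1) S_C by auto
    then show ?thesis using pq by auto
  qed
  have "path3_component ?F v" if v: "v \<in> verts A - {a, a1, x}" for v
  proof -
    have v_S_C: "v \<in> S - C" using v S_C by auto
    then have "path3_component F v"
      using factor subset_G unfolding lambda_factor_iff by blast
    moreover have "{} \<notin> ?F" using no_empty_edge by simp
    moreover have K: "component UNIV F v \<subseteq> S - C"
      using S_minus_C_closed v_S_C by (rule component_subset_closed)
    have "e \<in> ?F \<longleftrightarrow> e \<in> F" if "e \<inter> component UNIV F v \<noteq> {}" for e
    proof -
      have "e \<noteq> {a1, c}" using that K component_refl[of a1 UNIV F] c_notin_A by auto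
      then show ?thesis using that K edge_inside_S by auto
    qed
    ultimately show ?thesis by (rule path3_component_cong)
  qed
  then show ?thesis
    using x by (intro lambda_factor_insert_pendant_edge[OF graph_A inside pendant a1x _ isolated]) auto
qed

end

lemma pred_add_pred_mod_6:
  fixes n m :: nat
  assumes "n mod 6 = 0" "m mod 6 = 0" "n \<ge> 1" "m \<ge> 1"
  shows "(n - 1 + (m - 1)) mod 6 = 4"
proof -
  obtain k l where "n = 6 * k" "m = 6 * l" using assms(1,2) by (metis mult_div_mod_eq add_0_right)
  moreover have "k \<ge> 1" "l \<ge> 1" using calculation assms(3,4) by simp_all
  ultimately have "n - 1 + (m - 1) = 4 + 6 * (k + l - 1)" by simp
  then show ?thesis by simp
qed

lemma verts_glue: "verts (glue A a \<sigma> b B) = (verts A - {a}) \<union> (verts B - {b})"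
  by (simp add: glue_def verts_def)

lemma card_verts_glue:
  assumes "finite (verts A)" "finite (verts B)" "verts A \<inter> verts B = {}"
    and "a \<in> verts A" "b \<in> verts B"
  shows "card (verts (glue A a \<sigma> b B)) = (card (verts A) - 1) + (card (verts B) - 1)"
proof -
  have "card ((verts A - {a}) \<union> (verts B - {b})) = card (verts A - {a}) + card (verts B - {b})"
    using assms(1-3) by (intro card_Un_disjoint) auto
  then show ?thesis using assms(4,5) by (simp add: verts_glue)
qed

lemma edges_glueE:
  assumes "e \<in> edges (glue A a \<sigma> b B)"
  obtains "e \<in> edges A" "a \<notin> e" | "e \<in> edges B" | x where "x \<in> nbrs A a" "e = {x, \<sigma> x}"
  using assms unfolding glue_def edges_def by auto

lemma verts_del_vertex: "verts (del_vertex G v) = verts G - {v}"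
  by (simp add: del_vertex_def verts_def)

lemma edges_del_vertex: "edges (del_vertex G v) = {e \<in> edges G. v \<notin> e}"
  by (simp add: del_vertex_def edges_def)

lemma glue_del_vertex_single_exit:
  assumes "graph B" "verts A \<inter> verts B = {}" "nbrs A a = {a1, a2, a3}"
    and "\<sigma> a1 = b1" "\<sigma> a2 = b2" "\<sigma> a3 = b3"
    and "e \<in> edges (del_vertex (glue A a \<sigma> b B) b2)" "e \<noteq> {a3, b3}"
    and "e \<inter> (verts A - {a}) \<noteq> {}"
  shows "(e \<in> edges A \<and> a \<notin> e) \<or> e = {a1, b1}"
proof -
  have e: "e \<in> edges (glue A a \<sigma> b B)" "b2 \<notin> e"
    using assms(7) by (simp_all add: edges_del_vertex)
  from e(1) show ?thesis
  proof (cases rule: edges_glueE)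
    case 2
    have "e \<subseteq> verts B" using assms(1) 2 by (rule graph_edge_subset)
    then show ?thesis using assms(2,9) by blast
  next
    case (3 x)
    then show ?thesis using assms(3-6,8) e(2) by auto
  qed simp
qed

theorem mainTheorem10:
  fixes A B :: "'a graph" and a b a1 a2 a3 b1 b2 b3 :: 'a and \<sigma> :: "'a \<Rightarrow> 'a"
  assumes "cubic A" and "cubic B"
    and "verts A \<inter> verts B = {}"
    and "card (verts A) mod 6 = 0" and "card (verts B) mod 6 = 0"
    and "a \<in> verts A" and "nbrs A a = {a1, a2, a3}"
    and "a1 \<noteq> a2" and "a1 \<noteq> a3" and "a2 \<noteq> a3"
    and "b \<in> verts B" and "nbrs B b = {b1, b2, b3}"
    and "b1 \<noteq> b2" and "b1 \<noteq> b3" and "b2 \<noteq> b3"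
    and "\<sigma> a1 = b1" and "\<sigma> a2 = b2" and "\<sigma> a3 = b3"
    and "\<not> (\<exists>F. lambda_factor A F \<and> {a, a1} \<in> F)"
  shows "card (verts (glue A a \<sigma> b B)) mod 6 = 4 \<and>
    (\<forall>F. lambda_factor (del_vertex (glue A a \<sigma> b B) b2) F \<longrightarrow> {a3, b3} \<in> F)"
proof -
  let ?G = "del_vertex (glue A a \<sigma> b B) b2"
  have A: "graph A" "finite (verts A)" and B: "graph B" "finite (verts B)"
    using assms(1,2) by (simp_all add: cubic_def graph_def)
  have "card (verts A) \<ge> 1" "card (verts B) \<ge> 1"
    using A(2) B(2) assms(6,11) card_gt_0_iff by (metis One_nat_def Suc_leI empty_iff)+
  then have card: "card (verts (glue A a \<sigma> b B)) mod 6 = 4"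
    using card_verts_glue[OF A(2) B(2) assms(3,6,11)] pred_add_pred_mod_6 assms(4,5) by simp
  have "b1 \<in> verts B" "b2 \<in> verts B"
    using graph_edge_endpoints[OF B(1)] assms(12) by (auto simp: nbrs_def)
  then have b_notin_A: "b1 \<notin> verts A" "b2 \<notin> verts A" using assms(3) by auto
  have three: "3 dvd card (verts A)" using assms(4) by presburger
  have pendant: "{a, a1} \<in> edges A" using assms(7) unfolding nbrs_def by blast
  have subset: "verts A - {a} \<subseteq> verts ?G"
    using b_notin_A by (auto simp: verts_del_vertex verts_glue)
  have "{a3, b3} \<in> F" if factor: "lambda_factor ?G F" for F
  proof (rule ccontr)
    assume "{a3, b3} \<notin> F"
    then have "(e \<in> edges A \<and> a \<notin> e) \<or> e = {a1, b1}"
      if "e \<in> F" "e \<inter> (verts A - {a}) \<noteq> {}" for e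
      using that factor glue_del_vertex_single_exit[OF B(1) assms(3,7,16-18)]
      unfolding lambda_factor_iff by blast
    then interpret single_exit_factor A ?G F a a1 b1
      by (rule single_exit_factor.intro[OF A(1) three assms(6) pendant b_notin_A(1) factor subset])
    show False using lambda_factor_restrict_insert_pendant assms(19) by blast
  qed
  with card show ?thesis by blast
qed

end
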